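(* Let $\hat C\subseteq\mathbb Z^2$ be a set whose set of $x$-coordinates $\hat C_/$ is bounded. Let $\hat F_1,\dots,\hat F_t$ ($t\ge1$) be the intersections of $\hat C$ with those vertical lines $\{x=c\}$ that meet $\hat C$ in a finite nonempty set, and let $\hat K_1,\dots,\hat K_r$ be the intersections of $\hat C$ with those vertical lines that meet $\hat C$ in an infinite set; for a point set $S$ in one vertical line $\{x=c\}$ write $\operatorname{Col}(S)=\{(c,y):y\in\mathbb Z\}$. Let $\ell$ be the minimal number of elements of an integer interval $[a,b]$ for which there exists $W\subseteq\mathbb Z$ with $\hat C_/+W=[a,b]$. Suppose that for each $i\in\{1,\dots,r\}$ there are sets $\hat S_{i,1},\dots,\hat S_{i,n_i}$ with $\hat S_{i,1}\cup\cdots\cup\hat S_{i,n_i}=\hat K_i$ such that for each $i,j$ there exist (possibly empty) sets $\hat W_{i,j;\mu},\hat U_{i,j;\nu}\subseteq\mathbb Z^2$ ($1\le\mu\le t$, $1\le\nu\le r$) with \[\operatorname{Col}(\hat K_i)\setminus\hat S_{i,j}=\bigcup_{\mu=1}^{t}\bigl(\hat F_\mu+\hat W_{i,j;\mu}\bigr)\cup\bigcup_{\nu=1}^{r}\bigl(\hat K_\nu+\hat U_{i,j;\nu}\bigr).\] Then for every integer $m$ with \[m\ge(\ell+1)\Bigl(t+\sum_{i=1}^r n_i\Bigr),\] the set $C=\pi_m(\hat C)$ arises as a minimal additive complement in $\mathbb Z$.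
   Context: Sums of subsets of $\mathbb Z^2$ or $\mathbb Z$ are Minkowski sums $X+Y=\{x+y:x\in X,y\in Y\}$. For $m\ge1$, $\pi_m:\mathbb Z^2\to\mathbb Z$ is the map $(x,y)\mapsto x+my$ (equivalently the quotient $\mathbb Z^2\to\mathbb Z^2/\mathbb Z(m,-1)\cong\mathbb Z$). $C\subseteq\mathbb Z$ is a minimal additive complement (MAC) to $W\subseteq\mathbb Z$ if $C+W=\mathbb Z$ and no proper subset $C'\subsetneq C$ satisfies $C'+W=\mathbb Z$; $C$ arises as a MAC if such a $W$ exists. *)

theory Defs
  imports Main "HOL-Library.Product_Plus"
begin

definition msum :: "'a::plus set \<Rightarrow> 'a set \<Rightarrow> 'a set" (infixl "\<oplus>" 65) where
  "A \<oplus> B = {x + y | x y. x \<in> A \<and> y \<in> B}"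

definition proj_m :: "int \<Rightarrow> int \<times> int \<Rightarrow> int" where
  "proj_m m p = fst p + m * snd p"

definition is_MAC :: "int set \<Rightarrow> int set \<Rightarrow> bool" where
  "is_MAC C W \<longleftrightarrow> C \<oplus> W = UNIV \<and> (\<forall>C'. C' \<subset> C \<longrightarrow> C' \<oplus> W \<noteq> UNIV)"

definition arises_as_MAC :: "int set \<Rightarrow> bool" where
  "arises_as_MAC C \<longleftrightarrow> (\<exists>W. is_MAC C W)"

definition xcoords :: "(int \<times> int) set \<Rightarrow> int set" where
  "xcoords A = fst ` A"

definition colset :: "int \<Rightarrow> (int \<times> int) set" where
  "colset c = {(c, y) | y. True}"

definition column :: "(int \<times> int) set \<Rightarrow> int \<Rightarrow> (int \<times> int) set" where
  "column A c = {p \<in> A. fst p = c}"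

definition fin_cols :: "(int \<times> int) set \<Rightarrow> int set" where
  "fin_cols A = {c. finite (column A c) \<and> column A c \<noteq> {}}"

definition inf_cols :: "(int \<times> int) set \<Rightarrow> int set" where
  "inf_cols A = {c. infinite (column A c)}"

definition ell :: "int set \<Rightarrow> nat" where
  "ell X = (LEAST k. \<exists>a b W. a \<le> b \<and> X \<oplus> W = {a..b} \<and> k = card {a..b})"

end

theory Submission
  imports Defs
begin

text \<open>
  Give every finite column of \<open>Chat\<close> and every piece \<open>S c j\<close> of an infinite column its own
  residue class modulo m, the reserved residues being L + 1 apart, where L = \<open>ell (xcoords Chat)\<close>.
  Two x-coordinates of \<open>Chat\<close> differ by less than L, so a sum \<open>proj_m m p + w\<close> can only hit a
  reserved class in the intended way, and on that class the problem becomes two-dimensional and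
  confined to a single column: a finite column is complemented by lifting a minimal complement of
  the finite set of its y-coordinates, a piece \<open>S c j\<close> by the translates given in the hypothesis,
  and in both cases every point of the piece has a private target. The remaining residues are
  covered by translates of the x-coordinates filling windows of length L that avoid the reserved
  classes.
\<close>

section \<open>Minimal additive complements of finite sets\<close>

lemma is_MAC_iff_private_targets:
  "is_MAC C W \<longleftrightarrow> C \<oplus> W = UNIV \<and> (\<forall>c\<in>C. \<exists>z. \<forall>c'\<in>C. \<forall>w\<in>W. c' + w = z \<longrightarrow> c' = c)"
proof
  assume mac: "is_MAC C W"
  have "\<exists>z. \<forall>c'\<in>C. \<forall>w\<in>W. c' + w = z \<longrightarrow> c' = c" if "c \<in> C" for c
  proof -
    have "(C - {c}) \<oplus> W \<noteq> UNIV" using mac that unfolding is_MAC_def by blast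
    then obtain z where z: "z \<notin> (C - {c}) \<oplus> W" by blast
    have "c' = c" if "c' \<in> C" "w \<in> W" "c' + w = z" for c' w
    proof (rule ccontr)
      assume "c' \<noteq> c"
      then have "z \<in> (C - {c}) \<oplus> W" using that unfolding msum_def by blast
      then show False using z by contradiction
    qed
    then show ?thesis by blast
  qed
  then show "C \<oplus> W = UNIV \<and> (\<forall>c\<in>C. \<exists>z. \<forall>c'\<in>C. \<forall>w\<in>W. c' + w = z \<longrightarrow> c' = c)"
    using mac unfolding is_MAC_def by blast
next
  assume targets: "C \<oplus> W = UNIV \<and> (\<forall>c\<in>C. \<exists>z. \<forall>c'\<in>C. \<forall>w\<in>W. c' + w = z \<longrightarrow> c' = c)"
  have "C' \<oplus> W \<noteq> UNIV" if "C' \<subset> C" for C'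
  proof -
    obtain c where c: "c \<in> C" "c \<notin> C'" using \<open>C' \<subset> C\<close> by blast
    then obtain z where "\<forall>c'\<in>C. \<forall>w\<in>W. c' + w = z \<longrightarrow> c' = c" using targets by blast
    then have "z \<notin> C' \<oplus> W" using c \<open>C' \<subset> C\<close> unfolding msum_def by blast
    then show ?thesis by blast
  qed
  then show "is_MAC C W" using targets unfolding is_MAC_def by blast
qed

lemma msum_compl_differences_eq_UNIV:
  fixes F :: "int set" and K R :: int
  assumes fin: "finite F" and ne: "F \<noteq> {}" and R: "\<And>f. f \<in> F \<Longrightarrow> \<bar>f\<bar> \<le> R"
    and K: "4 * R < K"
  shows "F \<oplus> - {K * g - h | g h. g \<in> F \<and> h \<in> F \<and> h \<noteq> g} = UNIV"
proof (rule ccontr)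
  define B where "B = {K * g - h | g h. g \<in> F \<and> h \<in> F \<and> h \<noteq> g}"
  have K_mult_eq_0: "a = 0" if "K * a = b" "\<bar>b\<bar> \<le> 4 * R" for a b
  proof (rule ccontr)
    assume "a \<noteq> 0"
    then have "1 \<le> \<bar>a\<bar>" by simp
    then have "\<bar>K\<bar> \<le> \<bar>K * a\<bar>" by (simp add: abs_mult mult_le_cancel_left1)
    then show False using that K abs_ge_self[of K] by linarith
  qed
  assume "F \<oplus> - {K * g - h | g h. g \<in> F \<and> h \<in> F \<and> h \<noteq> g} \<noteq> UNIV"
  then obtain z where "z \<notin> F \<oplus> (- B)" unfolding B_def by blast
  have z: "z - f \<in> B" if "f \<in> F" for f
  proof (rule ccontr)
    assume "z - f \<notin> B"
    then have "z \<in> F \<oplus> (- B)"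
      using that unfolding msum_def by (intro CollectI exI[of _ f] exI[of _ "z - f"]) simp
    then show False using \<open>z \<notin> F \<oplus> (- B)\<close> by contradiction
  qed
  obtain f0 where f0: "f0 \<in> F" using ne by blast
  then obtain g0 h0 where g0: "g0 \<in> F" "h0 \<in> F" "z - f0 = K * g0 - h0"
    using z unfolding B_def by blast
  \<comment> \<open>As K > 4 R, all the z - f have the same leading term K g0, so F - z + K g0 lies in F - {g0}.\<close>
  have "f - (z - K * g0) \<in> F - {g0}" if f: "f \<in> F" for f
  proof -
    obtain g h where gh: "g \<in> F" "h \<in> F" "h \<noteq> g" "z - f = K * g - h"
      using z[OF f] unfolding B_def by blast
    have "K * (g - g0) = f0 - f + h - h0" using gh g0 by (simp add: algebra_simps)
    moreover have "\<bar>f0 - f + h - h0\<bar> \<le> 4 * R"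
      using R[OF f] R[OF f0] R[OF \<open>h \<in> F\<close>] R[OF \<open>h0 \<in> F\<close>] by linarith
    ultimately have "g = g0" using K_mult_eq_0[of "g - g0"] by simp
    then have "f - (z - K * g0) = h" using gh by simp
    then show ?thesis using gh \<open>g = g0\<close> by simp
  qed
  then have "(\<lambda>f. f - (z - K * g0)) ` F \<subseteq> F - {g0}" by (rule image_subsetI)
  then have "card F \<le> card (F - {g0})"
    by (rule card_inj_on_le[rotated]) (use fin in \<open>auto simp: inj_on_def\<close>)
  moreover have "card F > 0" using fin g0(1) card_gt_0_iff by blast
  ultimately show False using fin g0(1) by (simp add: card_Diff_singleton)
qed

lemma finite_arises_as_MAC:
  fixes F :: "int set"
  assumes fin: "finite F" and ne: "F \<noteq> {}"
  shows "arises_as_MAC F"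
proof -
  define R where "R = Max (abs ` F)"
  have R: "\<bar>f\<bar> \<le> R" if "f \<in> F" for f
    unfolding R_def using fin that by auto
  define K where "K = 4 * R + 1"
  \<comment> \<open>The complement is \<open>- B\<close>: the target K f is then reached only from f.\<close>
  define B where "B = {K * g - h | g h. g \<in> F \<and> h \<in> F \<and> h \<noteq> g}"
  have "F \<oplus> (- B) = UNIV"
    unfolding B_def using fin ne R by (intro msum_compl_differences_eq_UNIV) (auto simp: K_def)
  moreover have "\<forall>f'\<in>F. \<forall>y\<in>- B. f' + y = K * f \<longrightarrow> f' = f" if "f \<in> F" for f
  proof (intro ballI impI)
    fix f' y assume "f' \<in> F" "y \<in> - B" "f' + y = K * f"
    then have "y = K * f - f'" "y \<notin> B" by auto
    then have "K * f - f' \<notin> B" by simp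
    moreover have "K * f - f' \<in> B" if "f' \<noteq> f"
      unfolding B_def using that \<open>f \<in> F\<close> \<open>f' \<in> F\<close> by auto
    ultimately show "f' = f" by blast
  qed
  ultimately have "is_MAC F (- B)"
    unfolding is_MAC_iff_private_targets by blast
  then show ?thesis unfolding arises_as_MAC_def by blast
qed

section \<open>Intervals filled by translates of a finite set\<close>

lemma msum_image_add: "X \<oplus> ((+) t ` W) = (+) t ` (X \<oplus> W)"
  for t :: "'a::ab_semigroup_add"
proof (intro set_eqI iffI)
  fix z assume "z \<in> X \<oplus> ((+) t ` W)"
  then obtain x w where "x \<in> X" "w \<in> W" "z = t + (x + w)"
    unfolding msum_def by (auto simp: ac_simps)
  then show "z \<in> (+) t ` (X \<oplus> W)" unfolding msum_def by blast
next
  fix z assume "z \<in> (+) t ` (X \<oplus> W)"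
  then obtain x w where "x \<in> X" "w \<in> W" "z = x + (t + w)"
    unfolding msum_def by (auto simp: ac_simps)
  then show "z \<in> X \<oplus> ((+) t ` W)" unfolding msum_def by blast
qed

lemma ell_tiles:
  fixes X :: "int set"
  assumes fin: "finite X" and ne: "X \<noteq> {}"
  shows "0 < ell X \<and> (\<exists>W. X \<oplus> W = {0..<int (ell X)})"
proof -
  define x0 x1 where "x0 = Min X" and "x1 = Max X"
  have x01: "x0 \<in> X" "x1 \<in> X" "\<And>x. x \<in> X \<Longrightarrow> x0 \<le> x \<and> x \<le> x1"
    using fin ne unfolding x0_def x1_def by auto
  have "X \<oplus> {-x0 .. x1 - 2 * x0} = {0 .. 2 * (x1 - x0)}"
  proof (intro set_eqI iffI)
    fix z assume "z \<in> X \<oplus> {-x0 .. x1 - 2 * x0}"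
    then show "z \<in> {0 .. 2 * (x1 - x0)}" unfolding msum_def using x01 by fastforce
  next
    fix z assume z: "z \<in> {0 .. 2 * (x1 - x0)}"
    show "z \<in> X \<oplus> {-x0 .. x1 - 2 * x0}"
    proof (cases "z \<le> x1 - x0")
      case True
      then have "z = x0 + (z - x0)" "z - x0 \<in> {-x0 .. x1 - 2 * x0}" using z by auto
      then show ?thesis unfolding msum_def using x01 by blast
    next
      case False
      then have "z = x1 + (z - x1)" "z - x1 \<in> {-x0 .. x1 - 2 * x0}" using z by auto
      then show ?thesis unfolding msum_def using x01 by blast
    qed
  qed
  moreover have "0 \<le> 2 * (x1 - x0)" using x01 by force
  ultimately have "\<exists>k a b W. a \<le> b \<and> X \<oplus> W = {a..b} \<and> k = card {a..b}" by blast
  then have "\<exists>a b W. a \<le> b \<and> X \<oplus> W = {a..b} \<and> ell X = card {a..b}"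
    unfolding ell_def by (rule LeastI_ex)
  then obtain a b W where ab: "a \<le> b" "X \<oplus> W = {a..b}" "ell X = card {a..b}" by blast
  have "X \<oplus> ((+) (- a) ` W) = {0..<b - a + 1}"
    unfolding msum_image_add ab(2) by auto
  moreover have "int (ell X) = b - a + 1" using ab by simp
  ultimately show ?thesis using ab by auto
qed

lemma tile_window:
  fixes X W :: "int set"
  assumes tile: "X \<oplus> W = {0..<L}" and z: "s \<le> z" "z < s + L"
  shows "\<exists>x\<in>X. \<exists>w. z = x + w \<and> (\<forall>x'\<in>X. x' + w \<in> {s..<s + L})"
proof -
  have "z - s \<in> X \<oplus> W" using tile z by simp
  then obtain x w where xw: "x \<in> X" "w \<in> W" "z - s = x + w" unfolding msum_def by blast
  have "x' + (w + s) \<in> {s..<s + L}" if "x' \<in> X" for x'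
  proof -
    have "x' + w \<in> X \<oplus> W" using that xw(2) unfolding msum_def by blast
    then show ?thesis using tile by simp
  qed
  moreover have "z = x + (w + s)" using xw(3) by simp
  ultimately show ?thesis using xw(1) by blast
qed

lemma tile_diameter:
  fixes X W :: "int set"
  assumes tile: "X \<oplus> W = {0..<L}" and "0 < L" "x \<in> X" "x' \<in> X"
  shows "\<bar>x - x'\<bar> < L"
proof -
  obtain w where "x' + w \<in> {0..<L}" "x + w \<in> {0..<L}"
    using tile_window[OF tile, of 0 0] \<open>0 < L\<close> \<open>x \<in> X\<close> \<open>x' \<in> X\<close> by auto
  then show ?thesis by auto
qed

section \<open>Reserved residues\<close>

text \<open>Residues modulo m to be reserved for the tasks; distinct slots are more than L apart.\<close>

definition slots :: "int \<Rightarrow> int \<Rightarrow> int set" where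
  "slots L m = {u. 0 \<le> u \<and> u < m \<and> u mod (L + 1) = L}"

lemma slots_ge: "u \<in> slots L m \<Longrightarrow> L \<le> u"
  unfolding slots_def using zmod_le_nonneg_dividend[of u "L + 1"] by auto

lemma slots_shift_eq:
  assumes a: "a \<in> slots L m" and b: "b \<in> slots L m" and d: "\<bar>d\<bar> < L"
    and eq: "(a + d) mod m = b"
  shows "a = b \<and> d = 0"
proof -
  have "L \<le> a" "L \<le> b" using a b by (simp_all add: slots_ge)
  have "a < m" using a unfolding slots_def by simp
  have d_bounds: "- L < d" "d < L" using d by auto
  have "a + d < m"
  proof (rule ccontr)
    assume "\<not> a + d < m"
    then have "(a + d - m) mod m = a + d - m"
      using \<open>a < m\<close> \<open>L \<le> a\<close> d_bounds by (intro mod_pos_pos_trivial) linarith+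
    then have "b = a + d - m" using eq by simp
    then show False using \<open>L \<le> b\<close> \<open>a < m\<close> d_bounds by linarith
  qed
  then have "a + d = b" using eq \<open>L \<le> a\<close> d_bounds mod_pos_pos_trivial[of "a + d" m] by linarith
  then have "(a + d) mod (L + 1) = a mod (L + 1)" using a b unfolding slots_def by simp
  then have "(L + 1) dvd d" by (simp add: mod_eq_dvd_iff)
  then have "d = 0" using d_bounds dvd_imp_le_int[of d "L + 1"] dvd_imp_le_int[of "- d" "L + 1"] by force
  then show ?thesis using \<open>a + d = b\<close> by simp
qed

lemma slot_free_window:
  fixes L r :: int
  assumes L: "0 < L" and r: "0 \<le> r"
  shows "\<exists>s. 0 \<le> s \<and> s \<le> r \<and> r < s + L \<and> (\<forall>u\<in>{s..<s + L}. u mod (L + 1) = L \<longrightarrow> u = r)"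
proof -
  define s where "s = (if r mod (L + 1) = L then r else r - r mod (L + 1))"
  have s: "0 \<le> s" "s \<le> r" "r < s + L"
    using r L pos_mod_bound[of "L + 1" r] zmod_le_nonneg_dividend[of r "L + 1"]
    unfolding s_def by auto
  have "\<forall>u\<in>{s..<s + L}. u mod (L + 1) = L \<longrightarrow> u = r"
  proof (intro ballI impI)
    fix u assume "u \<in> {s..<s + L}" "u mod (L + 1) = L"
    then have u: "s \<le> u" "u < s + L" "u mod (L + 1) = L" by auto
    show "u = r"
    proof (cases "r mod (L + 1) = L")
      case True
      then have "u mod (L + 1) = r mod (L + 1)" using u(3) by simp
      then have "(L + 1) dvd (u - r)" by (simp only: mod_eq_dvd_iff)
      then have "\<not> (0 < u - r \<and> u - r < L + 1)" using zdvd_not_zless by blast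
      then show "u = r" using u unfolding s_def True by auto
    next
      case False
      have "(u + 1) mod (L + 1) = 0" using u(3) by (simp add: mod_add_left_eq[symmetric])
      moreover have "s mod (L + 1) = 0" unfolding s_def using False by (simp add: mod_diff_left_eq)
      ultimately have "(u + 1) mod (L + 1) = s mod (L + 1)" by simp
      then have "(L + 1) dvd (u + 1 - s)" by (simp only: mod_eq_dvd_iff)
      then have "\<not> (0 < u + 1 - s \<and> u + 1 - s < L + 1)" using zdvd_not_zless by blast
      then show "u = r" using u by auto
    qed
  qed
  with s show ?thesis by blast
qed

lemma slots_window:
  assumes L: "0 < L" "L < m" and Q: "Q \<subseteq> slots L m" and r: "r mod m \<notin> Q"
  shows "\<exists>s. s \<le> r \<and> r < s + L \<and> (\<forall>u\<in>{s..<s + L}. u mod m \<notin> Q)"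
proof -
  define r0 k where "r0 = r mod m" and "k = r div m"
  have r0: "0 \<le> r0" "r0 < m" "r = r0 + m * k" using L unfolding r0_def k_def by simp_all
  obtain s0 where s0: "0 \<le> s0" "s0 \<le> r0" "r0 < s0 + L"
    and only_r0: "\<forall>u\<in>{s0..<s0 + L}. u mod (L + 1) = L \<longrightarrow> u = r0"
    using slot_free_window[OF L(1) r0(1)] by blast
  have free: "u mod m \<notin> Q" if u: "s0 \<le> u" "u < s0 + L" for u
  proof
    assume "u mod m \<in> Q"
    then have slot: "u mod m \<in> slots L m" using Q by blast
    show False
    proof (cases "u < m")
      case True
      then have "u mod m = u" using u s0 by simp
      then have "u = r0" using only_r0 u slot unfolding slots_def by auto
      then show False using \<open>u mod m = u\<close> \<open>u mod m \<in> Q\<close> r unfolding r0_def by simp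
    next
      case False
      then have "(u - m) mod m = u - m" using u s0 r0 L by (intro mod_pos_pos_trivial) linarith+
      then have "u mod m = u - m" by simp
      then show False using slots_ge[OF slot] u s0 r0 by linarith
    qed
  qed
  have "u mod m \<notin> Q" if "u \<in> {s0 + m * k..<s0 + m * k + L}" for u
  proof -
    have "(u - m * k) mod m = u mod m"
      using mod_mult_self1[of "u - m * k" k m] by (simp add: mult.commute)
    then show ?thesis using free[of "u - m * k"] that by auto
  qed
  then show ?thesis using s0 r0(3) by (intro exI[of _ "s0 + m * k"]) auto
qed

lemma ex_inj_into_slots:
  assumes "finite T" "0 \<le> L" "(L + 1) * int (card T) \<le> m"
  shows "\<exists>q. inj_on q T \<and> q ` T \<subseteq> slots L m"
proof -
  obtain idx where idx: "bij_betw idx T {0..<card T}"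
    using ex_bij_betw_finite_nat[OF \<open>finite T\<close>] by blast
  define q where "q \<tau> = int (idx \<tau>) * (L + 1) + L" for \<tau>
  have "inj_on q T"
    using bij_betw_imp_inj_on[OF idx] \<open>0 \<le> L\<close> unfolding q_def inj_on_def by auto
  moreover have "q \<tau> \<in> slots L m" if "\<tau> \<in> T" for \<tau>
  proof -
    have "int (idx \<tau>) + 1 \<le> int (card T)" using bij_betwE[OF idx] that by fastforce
    then have "(int (idx \<tau>) + 1) * (L + 1) \<le> int (card T) * (L + 1)"
      using \<open>0 \<le> L\<close> by (intro mult_right_mono) auto
    moreover have "q \<tau> mod (L + 1) = L"
      using mod_mult_self1[of L "int (idx \<tau>)" "L + 1"] \<open>0 \<le> L\<close> unfolding q_def by (simp add: add.commute)
    ultimately show ?thesis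
      using assms unfolding slots_def q_def by (auto simp: algebra_simps)
  qed
  ultimately show ?thesis by blast
qed

section \<open>Complements on a single column\<close>

lemma mem_column_iff [simp]: "p \<in> column A c \<longleftrightarrow> p \<in> A \<and> fst p = c"
  unfolding column_def by simp

lemma mem_colset_iff [simp]: "p \<in> colset c \<longleftrightarrow> fst p = c"
  unfolding colset_def by (cases p) simp

lemma mem_xcoords_iff: "x \<in> xcoords A \<longleftrightarrow> column A x \<noteq> {}"
  unfolding xcoords_def by force

text \<open>
  The two-dimensional problem a reserved residue class reduces to: \<open>V\<close> complements \<open>A\<close> on the
  column c using only shifts that move some column of \<open>A\<close> onto c, and every point of \<open>P\<close>
  is the only point of \<open>A\<close> reaching some target (c, k).
\<close>

definition column_complement ::
    "(int \<times> int) set \<Rightarrow> int \<Rightarrow> (int \<times> int) set \<Rightarrow> (int \<times> int) set \<Rightarrow> bool" where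
  "column_complement A c V P \<longleftrightarrow>
     (\<forall>v\<in>V. c - fst v \<in> xcoords A) \<and> colset c \<subseteq> A \<oplus> V \<and>
     (\<forall>p\<in>P. \<exists>k. \<forall>p'\<in>A. \<forall>v\<in>V. p' + v = (c, k) \<longrightarrow> p' = p)"

lemma column_complement_finite_column:
  assumes fin: "finite (column A c)" and ne: "column A c \<noteq> {}"
  shows "\<exists>V. column_complement A c V (column A c)"
proof -
  define F where "F = snd ` column A c"
  have "finite F" "F \<noteq> {}" using fin ne unfolding F_def by auto
  then obtain Y where "is_MAC F Y"
    using finite_arises_as_MAC unfolding arises_as_MAC_def by blast
  then have cover: "F \<oplus> Y = UNIV"
    and targets: "\<And>f. f \<in> F \<Longrightarrow> \<exists>z. \<forall>f'\<in>F. \<forall>y\<in>Y. f' + y = z \<longrightarrow> f' = f"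
    unfolding is_MAC_iff_private_targets by blast+
  have F_iff: "f \<in> F \<longleftrightarrow> (c, f) \<in> A" for f
    unfolding F_def by force
  define V :: "(int \<times> int) set" where "V = Pair 0 ` Y"
  have "c - fst v \<in> xcoords A" if "v \<in> V" for v
    using that ne unfolding V_def mem_xcoords_iff by auto
  moreover have "(c, k) \<in> A \<oplus> V" for k
  proof -
    obtain f y where "f \<in> F" "y \<in> Y" "k = f + y"
      using cover unfolding msum_def by blast
    then have "(c, f) \<in> A" "(0, y) \<in> V" "(c, k) = (c, f) + (0, y)"
      using F_iff unfolding V_def by auto
    then show ?thesis unfolding msum_def by blast
  qed
  then have "colset c \<subseteq> A \<oplus> V" by (auto simp: prod_eq_iff)
  moreover have "\<exists>k. \<forall>p'\<in>A. \<forall>v\<in>V. p' + v = (c, k) \<longrightarrow> p' = p" if p: "p \<in> column A c" for p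
  proof -
    have "snd p \<in> F" using p unfolding F_def by blast
    then obtain z where z: "\<forall>f'\<in>F. \<forall>y\<in>Y. f' + y = z \<longrightarrow> f' = snd p"
      using targets by blast
    have "p' = p" if "p' \<in> A" "v \<in> V" "p' + v = (c, z)" for p' v
    proof -
      obtain y where "y \<in> Y" "v = (0, y)" using \<open>v \<in> V\<close> unfolding V_def by blast
      then have "fst p' = c" "snd p' + y = z" using \<open>p' + v = (c, z)\<close> by (auto simp: prod_eq_iff)
      then have "snd p' = snd p" using z \<open>y \<in> Y\<close> \<open>p' \<in> A\<close> F_iff by (metis prod.collapse)
      then show "p' = p" using \<open>fst p' = c\<close> \<open>p \<in> column A c\<close> by (simp add: prod_eq_iff)
    qed
    then show ?thesis by blast
  qed
  ultimately show ?thesis unfolding column_complement_def by blast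
qed

lemma fst_shift_onto_column:
  assumes "column A d \<noteq> {}" and "column A d \<oplus> W \<subseteq> colset c" and "v \<in> W"
  shows "fst v = c - d"
proof -
  obtain p where "p \<in> column A d" using assms(1) by blast
  then have "p + v \<in> colset c" using assms(2,3) unfolding msum_def by blast
  then show ?thesis using \<open>p \<in> column A d\<close> by simp
qed

lemma column_complement_piece:
  assumes S: "S \<subseteq> column A c" and c: "c \<in> xcoords A" and D: "D \<subseteq> xcoords A"
    and rest: "colset c - S = (\<Union>d\<in>D. column A d \<oplus> W d)"
  shows "column_complement A c (insert 0 (\<Union>d\<in>D. W d)) S"
proof -
  define V where "V = insert 0 (\<Union>d\<in>D. W d)"
  have shift: "fst v = c - d" if "d \<in> D" "v \<in> W d" for d v
  proof (rule fst_shift_onto_column)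
    show "column A d \<noteq> {}" using D \<open>d \<in> D\<close> mem_xcoords_iff by blast
    show "column A d \<oplus> W d \<subseteq> colset c" using rest \<open>d \<in> D\<close> by blast
  qed fact
  have "c - fst v \<in> xcoords A" if v: "v \<in> V" for v
  proof -
    consider "v = 0" | d where "d \<in> D" "v \<in> W d" using v unfolding V_def by blast
    then show ?thesis
    proof cases
      case 2
      then show ?thesis using D shift[of d v] by auto
    qed (use c in simp)
  qed
  moreover have "q \<in> A \<oplus> V" if "q \<in> colset c" for q
  proof (cases "q \<in> S")
    case True
    then have "q \<in> A" "0 \<in> V" "q = q + 0" using S unfolding V_def by auto
    then show ?thesis unfolding msum_def by blast
  next
    case False
    then have "q \<in> (\<Union>d\<in>D. column A d \<oplus> W d)" using rest that by blast
    then obtain d p v where "d \<in> D" "p \<in> column A d" "v \<in> W d" "q = p + v"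
      unfolding msum_def by blast
    then have "p \<in> A" "v \<in> V" "q = p + v" unfolding V_def by auto
    then show ?thesis unfolding msum_def by blast
  qed
  moreover have "\<exists>k. \<forall>p'\<in>A. \<forall>v\<in>V. p' + v = (c, k) \<longrightarrow> p' = p" if p: "p \<in> S" for p
  proof (intro exI[of _ "snd p"] ballI impI)
    fix p' v assume p': "p' \<in> A" and v: "v \<in> V" and sum: "p' + v = (c, snd p)"
    then have "p' + v = p" using p S by (auto simp: prod_eq_iff)
    show "p' = p"
    proof (cases "v = 0")
      case True
      then show ?thesis using \<open>p' + v = p\<close> by simp
    next
      case False
      then obtain d where d: "d \<in> D" "v \<in> W d" using v unfolding V_def by blast
      then have "p' \<in> column A d" using shift p' sum by (auto simp: prod_eq_iff)
      then have "p \<in> colset c - S" using rest d \<open>p' + v = p\<close> unfolding msum_def by blast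
      then show ?thesis using p by blast
    qed
  qed
  ultimately show ?thesis unfolding column_complement_def V_def[symmetric] by blast
qed

section \<open>Lifting column complements along the projection\<close>

lemma proj_m_Pair [simp]: "proj_m m (x, y) = x + m * y"
  unfolding proj_m_def by simp

lemma proj_m_add: "proj_m m (p + v) = proj_m m p + proj_m m v"
  unfolding proj_m_def by (simp add: algebra_simps)

locale column_lifting =
  fixes A :: "(int \<times> int) set" and L m :: int and T :: "'k set"
    and q col :: "'k \<Rightarrow> int" and V P :: "'k \<Rightarrow> (int \<times> int) set"
  assumes tiles: "\<exists>W. xcoords A \<oplus> W = {0..<L}" and L_pos: "0 < L"
    and q_slots: "q ` T \<subseteq> slots L m" and inj_q: "inj_on q T"
    and complements: "\<tau> \<in> T \<Longrightarrow> column_complement A (col \<tau>) (V \<tau>) (P \<tau>)"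
    and pieces_cover: "A \<subseteq> (\<Union>\<tau>\<in>T. P \<tau>)"
begin

lemma xcoords_diameter: "x \<in> xcoords A \<Longrightarrow> x' \<in> xcoords A \<Longrightarrow> \<bar>x - x'\<bar> < L"
  using tiles tile_diameter L_pos by blast

lemma L_less_m: "L < m"
proof -
  obtain x where "x \<in> xcoords A" using tiles L_pos unfolding msum_def by fastforce
  then obtain p where "p \<in> A" unfolding xcoords_def by blast
  then obtain \<tau> where "\<tau> \<in> T" using pieces_cover by blast
  then have "q \<tau> \<in> slots L m" using q_slots by blast
  then show ?thesis using slots_ge unfolding slots_def by fastforce
qed

text \<open>
  Residues outside the slots are served by translates of the x-coordinates avoiding the slots;
  the slot \<open>q \<tau>\<close> is served by the column complement \<open>V \<tau>\<close>, shifted so that the column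
  \<open>col \<tau>\<close> lands on \<open>q \<tau>\<close>.
\<close>

definition lifted_complement :: "int set" where
  "lifted_complement =
     {w. \<forall>x\<in>xcoords A. (x + w) mod m \<notin> q ` T} \<union>
     (\<Union>\<tau>\<in>T. (\<lambda>v. q \<tau> - col \<tau> + proj_m m v) ` V \<tau>)"

lemma lifted_complement_hits_slot:
  assumes p: "p \<in> A" and w: "w \<in> lifted_complement" and \<tau>: "\<tau> \<in> T"
    and slot: "(proj_m m p + w) mod m = q \<tau>"
  shows "\<exists>v\<in>V \<tau>. w = q \<tau> - col \<tau> + proj_m m v \<and> fst (p + v) = col \<tau>"
proof -
  have x: "fst p \<in> xcoords A" using p unfolding xcoords_def by blast
  have mod_eq: "(proj_m m p + w) mod m = (fst p + w) mod m"
    unfolding proj_m_def using mod_mult_self1[of "fst p + w" "snd p" m] by (simp add: algebra_simps)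
  have "(fst p + w) mod m \<in> q ` T" using slot mod_eq \<tau> by simp
  then obtain \<sigma> v where \<sigma>: "\<sigma> \<in> T" "v \<in> V \<sigma>" and w_eq: "w = q \<sigma> - col \<sigma> + proj_m m v"
    using w x unfolding lifted_complement_def by blast
  define d where "d = col \<sigma> - fst v"
  have d: "d \<in> xcoords A" using complements[OF \<sigma>(1)] \<sigma>(2) unfolding column_complement_def d_def by blast
  \<comment> \<open>The sum lies in the class of \<open>q \<sigma>\<close> shifted by a difference of two x-coordinates.\<close>
  have "proj_m m p + w = q \<sigma> + (fst p - d) + (snd p + snd v) * m"
    unfolding w_eq d_def proj_m_def by (simp add: algebra_simps)
  then have "(q \<sigma> + (fst p - d)) mod m = q \<tau>" using slot by (metis mod_mult_self1)
  then have "q \<sigma> = q \<tau> \<and> fst p - d = 0"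
    using slots_shift_eq q_slots \<sigma>(1) \<tau> xcoords_diameter[OF x d] by blast
  then have "\<sigma> = \<tau>" "fst p = d" using inj_q \<sigma>(1) \<tau> by (auto dest: inj_onD)
  then show ?thesis using \<sigma> w_eq unfolding d_def by auto
qed

lemma proj_msum_lifted_complement: "proj_m m ` A \<oplus> lifted_complement = UNIV"
proof -
  have "z \<in> proj_m m ` A \<oplus> lifted_complement" for z
  proof (cases "z mod m \<in> q ` T")
    case True
    then obtain \<tau> where \<tau>: "\<tau> \<in> T" "z mod m = q \<tau>" by blast
    have "(col \<tau>, z div m) \<in> A \<oplus> V \<tau>"
      using complements[OF \<tau>(1)] unfolding column_complement_def by auto
    then obtain p v where pv: "p \<in> A" "v \<in> V \<tau>" "(col \<tau>, z div m) = p + v"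
      unfolding msum_def by blast
    have "z = proj_m m p + (q \<tau> - col \<tau> + proj_m m v)"
      using proj_m_add[of m p v] pv(3)[symmetric] \<tau>(2) div_mult_mod_eq[of z m] by (simp add: algebra_simps)
    moreover have "q \<tau> - col \<tau> + proj_m m v \<in> lifted_complement"
      unfolding lifted_complement_def using \<tau>(1) pv(2) by blast
    ultimately show ?thesis using pv(1) unfolding msum_def by blast
  next
    case False
    then obtain s where s: "s \<le> z" "z < s + L" and free: "\<forall>u\<in>{s..<s + L}. u mod m \<notin> q ` T"
      using slots_window[OF L_pos L_less_m q_slots] by blast
    obtain W0 where "xcoords A \<oplus> W0 = {0..<L}" using tiles by blast
    from tile_window[OF this s] obtain x w
      where x: "x \<in> xcoords A" "z = x + w" and window: "\<forall>x'\<in>xcoords A. x' + w \<in> {s..<s + L}"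
      by blast
    obtain y where "(x, y) \<in> A" using x(1) unfolding xcoords_def by force
    moreover have "w - m * y \<in> lifted_complement"
    proof -
      have "(x' + (w - m * y)) mod m = (x' + w) mod m" for x'
        using mod_mult_self1[of "x' + (w - m * y)" y m] by (simp add: algebra_simps)
      then show ?thesis unfolding lifted_complement_def using window free by auto
    qed
    moreover have "z = proj_m m (x, y) + (w - m * y)" using x(2) by simp
    ultimately show ?thesis unfolding msum_def by blast
  qed
  then show ?thesis by blast
qed

lemma proj_private_target:
  assumes "p \<in> A"
  shows "\<exists>z. \<forall>p'\<in>A. \<forall>w\<in>lifted_complement. proj_m m p' + w = z \<longrightarrow> proj_m m p' = proj_m m p"
proof -
  obtain \<tau> where \<tau>: "\<tau> \<in> T" "p \<in> P \<tau>" using pieces_cover assms by blast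
  then obtain k where k: "\<forall>p'\<in>A. \<forall>v\<in>V \<tau>. p' + v = (col \<tau>, k) \<longrightarrow> p' = p"
    using complements[OF \<tau>(1)] unfolding column_complement_def by blast
  have "p' = p"
    if p': "p' \<in> A" and w: "w \<in> lifted_complement" and z: "proj_m m p' + w = q \<tau> + m * k" for p' w
  proof -
    have "q \<tau> \<in> slots L m" using q_slots \<tau>(1) by blast
    then have "(proj_m m p' + w) mod m = q \<tau>" unfolding z slots_def by simp
    then obtain v where v: "v \<in> V \<tau>" "w = q \<tau> - col \<tau> + proj_m m v" "fst (p' + v) = col \<tau>"
      using lifted_complement_hits_slot[OF p' w \<tau>(1)] by blast
    have "m * snd (p' + v) = m * k"
      using z v(2,3) proj_m_add[of m p' v] unfolding proj_m_def by (simp add: algebra_simps)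
    then have "p' + v = (col \<tau>, k)" using v(3) L_pos L_less_m by (simp add: prod_eq_iff)
    then show "p' = p" using k p' v(1) by blast
  qed
  then show ?thesis by blast
qed

theorem proj_arises_as_MAC: "arises_as_MAC (proj_m m ` A)"
proof -
  have "is_MAC (proj_m m ` A) lifted_complement"
    unfolding is_MAC_iff_private_targets
    using proj_msum_lifted_complement proj_private_target by blast
  then show ?thesis unfolding arises_as_MAC_def by blast
qed

end

section \<open>Finite columns and pieces of infinite columns\<close>

lemma xcoords_eq_fin_cols_Un_inf_cols: "xcoords A = fin_cols A \<union> inf_cols A"
  unfolding fin_cols_def inf_cols_def by (auto simp: mem_xcoords_iff dest: infinite_imp_nonempty)

lemma fin_cols_Int_inf_cols: "fin_cols A \<inter> inf_cols A = {}"
  unfolding fin_cols_def inf_cols_def by auto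

text \<open>
  The task (c, 0) is the finite column at c (the paper's \<open>F\<^sub>\<mu>\<close>); the task (c, j) with j \<ge> 1
  is the piece \<open>S c j\<close> of the infinite column at c (the paper's \<open>S\<^sub>i\<^sub>,\<^sub>j\<close>).
\<close>

definition tasks :: "(int \<times> int) set \<Rightarrow> (int \<Rightarrow> nat) \<Rightarrow> (int \<times> nat) set" where
  "tasks A n = fin_cols A \<times> {0} \<union> Sigma (inf_cols A) (\<lambda>c. {1..n c})"

definition task_piece ::
    "(int \<times> int) set \<Rightarrow> (int \<Rightarrow> nat \<Rightarrow> (int \<times> int) set) \<Rightarrow> int \<times> nat \<Rightarrow> (int \<times> int) set" where
  "task_piece A S \<tau> = (if snd \<tau> = 0 then column A (fst \<tau>) else S (fst \<tau>) (snd \<tau>))"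

lemma finite_tasks: "finite (xcoords A) \<Longrightarrow> finite (tasks A n)"
  unfolding tasks_def xcoords_eq_fin_cols_Un_inf_cols by auto

lemma card_tasks_le:
  assumes "finite (xcoords A)"
  shows "int (card (tasks A n)) \<le> int (card (fin_cols A)) + (\<Sum>c\<in>inf_cols A. int (n c))"
proof -
  have "finite (inf_cols A)" using assms unfolding xcoords_eq_fin_cols_Un_inf_cols by simp
  then have "card (Sigma (inf_cols A) (\<lambda>c. {1..n c})) = (\<Sum>c\<in>inf_cols A. n c)" by simp
  moreover have "card (fin_cols A \<times> {0::nat}) = card (fin_cols A)" by (simp add: card_cartesian_product)
  ultimately have "card (tasks A n) \<le> card (fin_cols A) + (\<Sum>c\<in>inf_cols A. n c)"
    unfolding tasks_def by (metis card_Un_le)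
  then show ?thesis by (metis of_nat_add of_nat_le_iff of_nat_sum)
qed

lemma tasks_pieces_cover:
  assumes "\<forall>c \<in> inf_cols A. (\<Union>j \<in> {1..n c}. S c j) = column A c"
  shows "A \<subseteq> (\<Union>\<tau>\<in>tasks A n. task_piece A S \<tau>)"
proof
  fix p assume p: "p \<in> A"
  then have "fst p \<in> fin_cols A \<union> inf_cols A"
    unfolding xcoords_eq_fin_cols_Un_inf_cols[symmetric] xcoords_def by blast
  then show "p \<in> (\<Union>\<tau>\<in>tasks A n. task_piece A S \<tau>)"
  proof
    assume "fst p \<in> fin_cols A"
    then have "(fst p, 0) \<in> tasks A n" "p \<in> task_piece A S (fst p, 0)"
      using p unfolding tasks_def task_piece_def by auto
    then show ?thesis by blast
  next
    assume c: "fst p \<in> inf_cols A"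
    have "p \<in> column A (fst p)" using p by simp
    then have "p \<in> (\<Union>j \<in> {1..n (fst p)}. S (fst p) j)" using assms c by blast
    then obtain j where "j \<in> {1..n (fst p)}" "p \<in> S (fst p) j" by blast
    then have "(fst p, j) \<in> tasks A n" "p \<in> task_piece A S (fst p, j)"
      using c unfolding tasks_def task_piece_def by auto
    then show ?thesis by blast
  qed
qed

lemma column_complement_task_piece:
  assumes cover: "\<forall>c \<in> inf_cols A. (\<Union>j \<in> {1..n c}. S c j) = column A c"
    and repr: "\<forall>c \<in> inf_cols A. \<forall>j \<in> {1..n c}. \<exists>W U :: int \<Rightarrow> (int \<times> int) set.
        colset c - S c j =
          (\<Union>d \<in> fin_cols A. column A d \<oplus> W d) \<union> (\<Union>d \<in> inf_cols A. column A d \<oplus> U d)"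
    and \<tau>: "\<tau> \<in> tasks A n"
  shows "\<exists>V. column_complement A (fst \<tau>) V (task_piece A S \<tau>)"
proof -
  obtain c j where \<tau>_eq: "\<tau> = (c, j)" by (cases \<tau>)
  show ?thesis
  proof (cases "j = 0")
    case True
    then have "c \<in> fin_cols A" using \<tau> unfolding \<tau>_eq tasks_def by auto
    then show ?thesis
      using column_complement_finite_column unfolding \<tau>_eq True task_piece_def fin_cols_def by simp
  next
    case False
    then have c: "c \<in> inf_cols A" and j: "j \<in> {1..n c}" using \<tau> unfolding \<tau>_eq tasks_def by auto
    obtain W U :: "int \<Rightarrow> (int \<times> int) set" where WU: "colset c - S c j =
        (\<Union>d \<in> fin_cols A. column A d \<oplus> W d) \<union> (\<Union>d \<in> inf_cols A. column A d \<oplus> U d)"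
      using repr[rule_format, OF c j] by blast
    define W' where "W' d = (if d \<in> fin_cols A then W d else U d)" for d
    have "colset c - S c j =
        (\<Union>d \<in> fin_cols A. column A d \<oplus> W' d) \<union> (\<Union>d \<in> inf_cols A. column A d \<oplus> W' d)"
      unfolding WU W'_def using fin_cols_Int_inf_cols[of A]
      by (intro arg_cong2[where f = "(\<union>)"] SUP_cong) auto
    then have "colset c - S c j = (\<Union>d \<in> xcoords A. column A d \<oplus> W' d)"
      unfolding xcoords_eq_fin_cols_Un_inf_cols by blast
    moreover have "S c j \<subseteq> column A c" using cover c j by blast
    moreover have "c \<in> xcoords A" using c unfolding xcoords_eq_fin_cols_Un_inf_cols by blast
    ultimately have "column_complement A c (insert 0 (\<Union>d\<in>xcoords A. W' d)) (S c j)"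
      by (intro column_complement_piece) auto
    then show ?thesis unfolding \<tau>_eq task_piece_def using False by auto
  qed
qed

theorem theorem7:
  fixes Chat :: "(int \<times> int) set"
    and n :: "int \<Rightarrow> nat"
    and S :: "int \<Rightarrow> nat \<Rightarrow> (int \<times> int) set"
    and m :: int
  assumes bounded: "\<exists>B. \<forall>x \<in> xcoords Chat. \<bar>x\<bar> \<le> B"
    and t_pos: "fin_cols Chat \<noteq> {}"
    and S_cover: "\<forall>c \<in> inf_cols Chat. (\<Union>j \<in> {1..n c}. S c j) = column Chat c"
    and S_repr: "\<forall>c \<in> inf_cols Chat. \<forall>j \<in> {1..n c}. \<exists>W U :: int \<Rightarrow> (int \<times> int) set.
        colset c - S c j =
          (\<Union>d \<in> fin_cols Chat. column Chat d \<oplus> W d) \<union> (\<Union>d \<in> inf_cols Chat. column Chat d \<oplus> U d)"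
    and m_bound: "m \<ge> (int (ell (xcoords Chat)) + 1) *
                      (int (card (fin_cols Chat)) + (\<Sum>c \<in> inf_cols Chat. int (n c)))"
  shows "arises_as_MAC (proj_m m ` Chat)"
proof -
  define L where "L = int (ell (xcoords Chat))"
  obtain B where "xcoords Chat \<subseteq> {-B..B}" using bounded by (force simp: abs_le_iff)
  then have fin: "finite (xcoords Chat)" by (rule finite_subset) simp
  moreover have "xcoords Chat \<noteq> {}" using t_pos unfolding xcoords_eq_fin_cols_Un_inf_cols by blast
  ultimately have L: "0 < L" "\<exists>W. xcoords Chat \<oplus> W = {0..<L}"
    using ell_tiles unfolding L_def by auto
  have "(L + 1) * int (card (tasks Chat n)) \<le>
      (L + 1) * (int (card (fin_cols Chat)) + (\<Sum>c \<in> inf_cols Chat. int (n c)))"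
    using card_tasks_le[OF fin] \<open>0 < L\<close> by (intro mult_left_mono) auto
  then have "(L + 1) * int (card (tasks Chat n)) \<le> m" using m_bound unfolding L_def by linarith
  then obtain q where q: "inj_on q (tasks Chat n)" "q ` tasks Chat n \<subseteq> slots L m"
    using ex_inj_into_slots[OF finite_tasks[OF fin]] \<open>0 < L\<close> by (meson less_imp_le)
  obtain V where "\<forall>\<tau>\<in>tasks Chat n. column_complement Chat (fst \<tau>) (V \<tau>) (task_piece Chat S \<tau>)"
    using column_complement_task_piece[OF S_cover S_repr] by metis
  then interpret column_lifting Chat L m "tasks Chat n" q fst V "task_piece Chat S"
    using L q tasks_pieces_cover[OF S_cover] by unfold_locales auto
  show ?thesis by (rule proj_arises_as_MAC)
qed

end
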